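(* For any graph $G=([n],E)$ with at least one edge, $\kappa(G)=\sup_w \kappa(G,w)$, where the supremum ranges over all vectors $w\in\mathbb{R}^E$ such that $w^Tx\le 1$ is a facet-defining inequality of $\mathrm{CUT}(G)$, taken up to switching (i.e., it suffices to take one representative from each switching class of facet-defining inequalities).
   Context: For a graph $G=([n],E)$ and $w\in\mathbb{R}^E$, let $\mathrm{ip}(G,w)=\max_{x\in\{\pm1\}^n}\sum_{ij\in E}w_{ij}x_ix_j$ and $\mathrm{sdp}(G,w)=\max\sum_{ij\in E}w_{ij}u_i^Tu_j$, the maximum over unit vectors $u_1,\dots,u_n\in\mathbb{R}^n$; $\kappa(G,w)=\mathrm{sdp}(G,w)/\mathrm{ip}(G,w)$ and $\kappa(G)=\sup_{w\in\mathbb{R}^E}\kappa(G,w)$. $\mathrm{CUT}(G)$ is the projection onto the edge coordinates $\mathbb{R}^E$ of $\mathrm{conv}\{xx^T : x\in\{\pm1\}^n\}$; the origin lies in its interior, so its facets can be written as $w^Tx\le 1$. The switching of $w\in\mathbb{R}^E$ by $S\subseteq[n]$ is the vector $w^{(S)}$ with $w^{(S)}_{ij}=-w_{ij}$ if exactly one of $i,j$ lies in $S$, and $w^{(S)}_{ij}=w_{ij}$ otherwise. *)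

theory Defs
  imports "HOL-Analysis.Analysis"
begin

text \<open>Graphs on a finite vertex type 'n (so n = CARD('n), vertices play the role of [n]);
  edges are 2-element vertex sets. Vectors in R^E are represented in the Euclidean space
  real^('n set), with all coordinates outside E equal to zero.\<close>

definition ends :: "'n set \<Rightarrow> 'n \<times> 'n" where
  "ends e = (SOME p. e = {fst p, snd p} \<and> fst p \<noteq> snd p)"

definition RE :: "'n::finite set set \<Rightarrow> (real^('n set)) set" where
  "RE E = {w. \<forall>e. e \<notin> E \<longrightarrow> w $ e = 0}"

definition ip :: "'n::finite set set \<Rightarrow> real^('n set) \<Rightarrow> real" where
  "ip E w = Max {(\<Sum>e\<in>E. w $ e * x (fst (ends e)) * x (snd (ends e))) | x :: 'n \<Rightarrow> real.
                    \<forall>i. x i \<in> {-1, 1}}"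

definition sdp :: "'n::finite set set \<Rightarrow> real^('n set) \<Rightarrow> real" where
  "sdp E w = Sup {(\<Sum>e\<in>E. w $ e * (u (fst (ends e)) \<bullet> u (snd (ends e)))) | u :: 'n \<Rightarrow> real^'n.
                    \<forall>i. norm (u i) = 1}"

definition kappa_w :: "'n::finite set set \<Rightarrow> real^('n set) \<Rightarrow> real" where
  "kappa_w E w = sdp E w / ip E w"

definition kappa :: "'n::finite set set \<Rightarrow> ereal" where
  "kappa E = (SUP w\<in>RE E. ereal (kappa_w E w))"

definition cutvec :: "'n::finite set set \<Rightarrow> ('n \<Rightarrow> real) \<Rightarrow> real^('n set)" where
  "cutvec E x = (\<chi> e. if e \<in> E then x (fst (ends e)) * x (snd (ends e)) else 0)"

definition CUT :: "'n::finite set set \<Rightarrow> (real^('n set)) set" where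
  "CUT E = convex hull {cutvec E x | x. \<forall>i. x i \<in> {-1, 1}}"

definition facets :: "'n::finite set set \<Rightarrow> (real^('n set)) set" where
  "facets E = {w \<in> RE E. (\<forall>y\<in>CUT E. w \<bullet> y \<le> 1) \<and> {y \<in> CUT E. w \<bullet> y = 1} facet_of CUT E}"

definition switch :: "'n::finite set \<Rightarrow> real^('n set) \<Rightarrow> real^('n set)" where
  "switch S w = (\<chi> e. if card (e \<inter> S) = 1 then - (w $ e) else w $ e)"

end

theory Submission
  imports Defs
begin

text \<open>The cut polytope \<open>CUT(G)\<close> spans \<open>\<real>\<^sup>E\<close> and contains the origin, which is the average
  of all cut vectors. Hence \<open>CUT(G)\<close> is the set of \<open>y \<in> \<real>\<^sup>E\<close> with \<open>w\<^sup>T y \<le> 1\<close> for all facet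
  normals \<open>w\<close>, and every facet normal has \<open>ip(G,w) = 1\<close>. If \<open>sdp(G,w) \<le> m\<close> for all facet
  normals, then for unit vectors \<open>u\<^sub>1, \<dots>, u\<^sub>n\<close> the vector \<open>(u\<^sub>i\<^sup>T u\<^sub>j)\<close> indexed by the edges
  \<open>ij \<in> E\<close>, scaled by \<open>1/m\<close>, lies in \<open>CUT(G)\<close>; so \<open>sdp(G,w) \<le> m \<cdot> ip(G,w)\<close> for every \<open>w\<close>.
  Switching by \<open>S\<close> amounts to negating \<open>x\<^sub>i\<close>, resp. \<open>u\<^sub>i\<close>, for \<open>i \<in> S\<close>, so it preserves both
  \<open>ip\<close> and \<open>sdp\<close>.\<close>

lemma ends_props:
  assumes "card e = 2"
  shows "e = {fst (ends e), snd (ends e)} \<and> fst (ends e) \<noteq> snd (ends e)"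
proof -
  obtain a b where "e = {a, b}" "a \<noteq> b" using assms by (meson card_2_iff)
  then have "\<exists>p. e = {fst p, snd p} \<and> fst p \<noteq> snd p" by (intro exI[of _ "(a, b)"]) auto
  then show ?thesis unfolding ends_def by (rule someI_ex)
qed

lemma mult_ends:
  fixes x :: "'a \<Rightarrow> 'b::comm_semiring_1"
  assumes "card e = 2" "e = {a, b}"
  shows "x (fst (ends e)) * x (snd (ends e)) = x a * x b"
  using ends_props[OF assms(1)] assms(2) by (metis doubleton_eq_iff mult.commute)

definition cut_sign :: "'n set \<Rightarrow> 'n \<Rightarrow> real" where
  "cut_sign S i = (if i \<in> S then -1 else 1)"

lemma range_cut_sign: "range cut_sign = {x :: 'n \<Rightarrow> real. \<forall>i. x i \<in> {-1, 1}}"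
proof (intro set_eqI iffI)
  fix x :: "'n \<Rightarrow> real"
  assume "x \<in> {x. \<forall>i. x i \<in> {-1, 1}}"
  then have "x = cut_sign {i. x i = -1}" by (force simp: cut_sign_def fun_eq_iff)
  then show "x \<in> range cut_sign" by blast
qed (auto simp: cut_sign_def split: if_splits)

lemma cut_sign_mult_cut_sign: "cut_sign S i * cut_sign T i = cut_sign (sym_diff S T) i"
  by (auto simp: cut_sign_def)

lemma sum_cut_sign_mult_eq_0:
  assumes "i \<noteq> j"
  shows "(\<Sum>S\<in>(UNIV :: 'n::finite set set). cut_sign S i * cut_sign S j) = 0"
proof -
  define h where "h S = sym_diff S {i}" for S :: "'n set"
  have h_h: "h (h S) = S" for S unfolding h_def by auto
  have "cut_sign (h S) i * cut_sign (h S) j = - (cut_sign S i * cut_sign S j)" for S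
    using assms unfolding h_def cut_sign_def by auto
  then have "(\<Sum>S\<in>UNIV. cut_sign S i * cut_sign S j) =
      - (\<Sum>S\<in>UNIV. cut_sign (h S) i * cut_sign (h S) j)"
    by (simp add: sum_negf)
  also have "(\<Sum>S\<in>UNIV. cut_sign (h S) i * cut_sign (h S) j) =
      (\<Sum>S\<in>UNIV. cut_sign S i * cut_sign S j)"
    by (rule sum.reindex_bij_witness[of _ h h]) (auto simp: h_h)
  finally show ?thesis by simp
qed

lemma subspace_RE: "subspace (RE E)"
  unfolding subspace_def RE_def by auto

definition cut_points :: "'n::finite set set \<Rightarrow> (real^('n set)) set" where
  "cut_points E = range (\<lambda>S. cutvec E (cut_sign S))"

lemma CUT_eq_convex_hull_cut_points: "CUT E = convex hull cut_points E"
proof -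
  have "{cutvec E x | x. \<forall>i. x i \<in> {-1, 1}} = cutvec E ` range cut_sign"
    unfolding range_cut_sign by blast
  then show ?thesis unfolding CUT_def cut_points_def by (simp add: image_image)
qed

lemma polytope_CUT: "polytope (CUT E)"
proof -
  have "finite (cut_points E)" unfolding cut_points_def by simp
  then show ?thesis unfolding CUT_eq_convex_hull_cut_points polytope_def by blast
qed

lemma cut_points_subset_CUT: "cut_points E \<subseteq> CUT E"
  unfolding CUT_eq_convex_hull_cut_points by (rule hull_subset)

lemma CUT_subset_RE: "CUT E \<subseteq> RE E"
  unfolding CUT_eq_convex_hull_cut_points
proof (rule hull_minimal)
  show "cut_points E \<subseteq> RE E" unfolding cut_points_def RE_def cutvec_def by auto
qed (simp add: subspace_RE subspace_imp_convex)

lemma inner_cutvec: "w \<bullet> cutvec E x = (\<Sum>e\<in>E. w $ e * x (fst (ends e)) * x (snd (ends e)))"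
  unfolding inner_vec_def cutvec_def by (simp add: if_distrib sum.If_cases mult.assoc)

lemma cutvec_nth:
  assumes "f \<in> E" "card f = 2" "f = {k, l}"
  shows "cutvec E x $ f = x k * x l"
  using assms mult_ends[OF assms(2,3)] by (simp add: cutvec_def)

lemma sum_cutvec_cut_sign_eq_0:
  assumes "\<forall>e\<in>E. card e = 2"
  shows "(\<Sum>S\<in>(UNIV :: 'n::finite set set). cutvec E (cut_sign S)) = 0"
proof (rule vec_eq_iff[THEN iffD2], rule allI)
  fix f :: "'n set"
  show "(\<Sum>S\<in>UNIV. cutvec E (cut_sign S)) $ f = 0 $ f"
  proof (cases "f \<in> E")
    case True
    then have "card f = 2" using assms by auto
    then obtain k l where kl: "f = {k, l}" "k \<noteq> l" using ends_props by blast
    show ?thesis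
      unfolding sum_component cutvec_nth[OF True \<open>card f = 2\<close> kl(1)]
      using sum_cut_sign_mult_eq_0[OF kl(2)] by simp
  qed (simp add: sum_component cutvec_def)
qed

lemma zero_in_CUT:
  assumes "\<forall>e\<in>E. card e = 2"
  shows "(0 :: real^('n::finite set)) \<in> CUT E"
proof -
  define N where "N = real (card (UNIV :: 'n set set))"
  have "N > 0" unfolding N_def by (simp add: card_gt_0_iff)
  have "(\<Sum>S\<in>(UNIV :: 'n set set). (1 / N) *\<^sub>R cutvec E (cut_sign S)) \<in> CUT E"
  proof (rule convex_sum)
    show "convex (CUT E)" unfolding CUT_eq_convex_hull_cut_points by simp
    show "(\<Sum>S\<in>(UNIV :: 'n set set). 1 / N) = 1" using \<open>N > 0\<close> by (simp add: N_def)
  qed (use \<open>N > 0\<close> cut_points_subset_CUT in \<open>auto simp: cut_points_def\<close>)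
  then show ?thesis by (simp add: scaleR_sum_right[symmetric] sum_cutvec_cut_sign_eq_0[OF assms])
qed

lemma axis_in_span_cut_points:
  assumes "\<forall>e\<in>E. card e = 2" "e \<in> E"
  shows "axis e 1 \<in> span (cut_points E)"
proof -
  have "card e = 2" using assms by auto
  then obtain i j where ij: "e = {i, j}" "i \<noteq> j" using ends_props by blast
  define c where "c S = cutvec E (cut_sign S)" for S
  have c_span: "c S \<in> span (cut_points E)" for S
    unfolding c_def cut_points_def by (rule span_base) simp
  \<comment> \<open>At an edge \<open>{k, l}\<close> the four products of signs cancel unless \<open>{k, l} = {i, j}\<close>.\<close>
  have "axis e 1 = (1/4) *\<^sub>R (c {} - c {i} - c {j} + c {i, j})"
  proof (rule vec_eq_iff[THEN iffD2], rule allI)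
    fix f
    show "axis e 1 $ f = ((1/4) *\<^sub>R (c {} - c {i} - c {j} + c {i, j})) $ f"
    proof (cases "f \<in> E")
      case True
      then have "card f = 2" using assms by auto
      then obtain k l where kl: "f = {k, l}" "k \<noteq> l" using ends_props by blast
      show ?thesis unfolding c_def using cutvec_nth[OF True \<open>card f = 2\<close> kl(1)] kl ij
        by (auto simp: axis_def cut_sign_def doubleton_eq_iff)
    next
      case False
      then show ?thesis using assms(2) unfolding c_def by (auto simp: axis_def cutvec_def)
    qed
  qed
  then show ?thesis by (simp only:) (intro span_mul span_add span_diff c_span)
qed

lemma affine_hull_CUT:
  assumes "\<forall>e\<in>E. card e = 2"
  shows "affine hull (CUT E) = RE E"
proof
  show "affine hull (CUT E) \<subseteq> RE E"
    by (rule hull_minimal[OF CUT_subset_RE]) (simp add: subspace_RE subspace_imp_affine)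
  have "affine hull (CUT E) = span (CUT E)"
    by (rule affine_hull_span_0) (rule hull_inc[OF zero_in_CUT[OF assms]])
  moreover have "RE E \<subseteq> span (cut_points E)"
  proof
    fix y assume "y \<in> RE E"
    then have "(y $ e) *s axis e 1 \<in> span (cut_points E)" for e
      using axis_in_span_cut_points[OF assms]
      by (cases "e \<in> E") (auto simp: RE_def scalar_mult_eq_scaleR span_zero intro: span_mul)
    then have "(\<Sum>e\<in>UNIV. (y $ e) *s axis e 1) \<in> span (cut_points E)" by (intro span_sum)
    then show "y \<in> span (cut_points E)" by (simp add: basis_expansion)
  qed
  moreover have "span (cut_points E) \<subseteq> span (CUT E)"
    by (rule span_mono[OF cut_points_subset_CUT])
  ultimately show "RE E \<subseteq> affine hull (CUT E)" by auto
qed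

lemma ip_eq_Max_cut_points: "ip E w = Max (inner w ` cut_points E)"
proof -
  have "{(\<Sum>e\<in>E. w $ e * x (fst (ends e)) * x (snd (ends e))) | x. \<forall>i. x i \<in> {-1, 1}} =
      (\<lambda>x. w \<bullet> cutvec E x) ` range cut_sign"
    unfolding range_cut_sign inner_cutvec by blast
  then show ?thesis unfolding ip_def cut_points_def by (simp add: image_image)
qed

lemma ip_attained: obtains y where "y \<in> cut_points E" "ip E w = w \<bullet> y"
proof -
  have "ip E w \<in> inner w ` cut_points E"
    unfolding ip_eq_Max_cut_points by (rule Max_in) (auto simp: cut_points_def)
  then show thesis using that by blast
qed

lemma inner_le_ip:
  assumes "y \<in> CUT E"
  shows "w \<bullet> y \<le> ip E w"
proof -
  have "CUT E \<subseteq> {y. w \<bullet> y \<le> ip E w}"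
    unfolding CUT_eq_convex_hull_cut_points
  proof (rule hull_minimal)
    show "cut_points E \<subseteq> {y. w \<bullet> y \<le> ip E w}"
      unfolding ip_eq_Max_cut_points by (auto simp: cut_points_def)
  qed (rule convex_halfspace_le)
  then show ?thesis using assms by blast
qed

lemma ip_nonneg:
  assumes "\<forall>e\<in>E. card e = 2"
  shows "0 \<le> ip E w"
  using inner_le_ip[OF zero_in_CUT[OF assms]] by simp

definition gram_vec :: "'n::finite set set \<Rightarrow> ('n \<Rightarrow> real^'n) \<Rightarrow> real^('n set)" where
  "gram_vec E u = (\<chi> e. if e \<in> E then u (fst (ends e)) \<bullet> u (snd (ends e)) else 0)"

lemma gram_vec_in_RE: "gram_vec E u \<in> RE E"
  unfolding gram_vec_def RE_def by auto

lemma inner_gram_vec: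
  "w \<bullet> gram_vec E u = (\<Sum>e\<in>E. w $ e * (u (fst (ends e)) \<bullet> u (snd (ends e))))"
  unfolding inner_vec_def gram_vec_def by (simp add: if_distrib sum.If_cases)

lemma sdp_eq_Sup_gram_vec:
  "sdp E w = Sup ((\<lambda>u. w \<bullet> gram_vec E u) ` {u. \<forall>i. norm (u i) = 1})"
proof -
  have "{(\<Sum>e\<in>E. w $ e * (u (fst (ends e)) \<bullet> u (snd (ends e)))) | u :: 'a \<Rightarrow> real^'a.
      \<forall>i. norm (u i) = 1} = (\<lambda>u. w \<bullet> gram_vec E u) ` {u. \<forall>i. norm (u i) = 1}"
    unfolding inner_gram_vec by blast
  then show ?thesis unfolding sdp_def by simp
qed

lemma inner_gram_vec_le_sdp:
  assumes "\<forall>i. norm (u i) = 1"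
  shows "w \<bullet> gram_vec E u \<le> sdp E w"
  unfolding sdp_eq_Sup_gram_vec
proof (rule cSup_upper)
  have "w \<bullet> gram_vec E v \<le> (\<Sum>e\<in>E. \<bar>w $ e\<bar>)" if "\<forall>i. norm (v i) = 1" for v
    unfolding inner_gram_vec
  proof (rule sum_mono)
    fix e
    have "\<bar>v (fst (ends e)) \<bullet> v (snd (ends e))\<bar> \<le> 1"
      using Cauchy_Schwarz_ineq2[of "v (fst (ends e))" "v (snd (ends e))"] that by simp
    then show "w $ e * (v (fst (ends e)) \<bullet> v (snd (ends e))) \<le> \<bar>w $ e\<bar>"
      by (metis abs_ge_self abs_mult mult_left_le order_trans abs_ge_zero)
  qed
  then show "bdd_above ((\<lambda>u. w \<bullet> gram_vec E u) ` {u. \<forall>i. norm (u i) = 1})"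
    by (auto simp: bdd_above_def)
qed (use assms in blast)

lemma sdp_le:
  assumes "\<And>u. \<forall>i. norm (u i) = 1 \<Longrightarrow> w \<bullet> gram_vec E u \<le> c"
  shows "sdp E w \<le> c"
  unfolding sdp_eq_Sup_gram_vec
proof (rule cSup_least)
  show "(\<lambda>u. w \<bullet> gram_vec E u) ` {u. \<forall>i. norm (u i) = 1} \<noteq> {}"
    by (auto intro!: exI[of _ "\<lambda>i. axis undefined (1 :: real)"])
qed (use assms in blast)

lemma ip_le_sdp: "ip E w \<le> sdp E w"
proof -
  obtain S where S: "ip E w = w \<bullet> cutvec E (cut_sign S)"
    using ip_attained unfolding cut_points_def by blast
  define u :: "'a \<Rightarrow> real^'a" where "u i = cut_sign S i *\<^sub>R axis undefined 1" for i
  have "u i \<bullet> u j = cut_sign S i * cut_sign S j" for i j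
    unfolding u_def by (simp add: inner_axis_axis)
  then have "gram_vec E u = cutvec E (cut_sign S)"
    unfolding gram_vec_def cutvec_def by presburger
  moreover have "\<forall>i. norm (u i) = 1" unfolding u_def by (simp add: cut_sign_def)
  ultimately show ?thesis using S inner_gram_vec_le_sdp by metis
qed

lemma switch_nth:
  assumes "card e = 2"
  shows "switch S w $ e = cut_sign S (fst (ends e)) * cut_sign S (snd (ends e)) * w $ e"
proof -
  define a b where "a = fst (ends e)" and "b = snd (ends e)"
  have "e = {a, b}" "a \<noteq> b" using ends_props[OF assms] unfolding a_def b_def by auto
  then have "card (e \<inter> S) = 1 \<longleftrightarrow> (a \<in> S) \<noteq> (b \<in> S)"
    by (cases "a \<in> S"; cases "b \<in> S") (auto simp: Int_insert_left)
  then show ?thesis unfolding switch_def a_def[symmetric] b_def[symmetric]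
    by (auto simp: cut_sign_def)
qed

lemma inner_switch_cutvec:
  assumes "\<forall>e\<in>E. card e = 2"
  shows "switch S w \<bullet> cutvec E (cut_sign T) = w \<bullet> cutvec E (cut_sign (sym_diff S T))"
  unfolding inner_cutvec cut_sign_mult_cut_sign[symmetric]
  using assms by (intro sum.cong) (auto simp: switch_nth algebra_simps)

lemma ip_switch:
  assumes "\<forall>e\<in>E. card e = 2"
  shows "ip E (switch S w) = ip E w"
proof -
  define F where "F T = w \<bullet> cutvec E (cut_sign T)" for T
  have "surj (sym_diff S)" by (rule surjI[of _ "sym_diff S"]) auto
  then have "range (\<lambda>T. F (sym_diff S T)) = range F"
    using image_image[of F "sym_diff S" UNIV] by simp
  then have "inner (switch S w) ` cut_points E = inner w ` cut_points E"
    unfolding cut_points_def image_image inner_switch_cutvec[OF assms] F_def .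
  then show ?thesis unfolding ip_eq_Max_cut_points by simp
qed

lemma inner_switch_gram_vec:
  assumes "\<forall>e\<in>E. card e = 2"
  shows "switch S w \<bullet> gram_vec E u = w \<bullet> gram_vec E (\<lambda>i. cut_sign S i *\<^sub>R u i)"
  unfolding inner_gram_vec
  using assms by (intro sum.cong) (auto simp: switch_nth algebra_simps)

lemma sdp_switch:
  assumes "\<forall>e\<in>E. card e = 2"
  shows "sdp E (switch S w) = sdp E w"
proof -
  define U where "U = {u :: 'a \<Rightarrow> real^'a. \<forall>i. norm (u i) = 1}"
  define h where "h u = (\<lambda>i. cut_sign S i *\<^sub>R u i)" for u :: "'a \<Rightarrow> real^'a"
  have "h (h u) = u" for u unfolding h_def by (simp add: fun_eq_iff cut_sign_def)
  moreover have "h ` U \<subseteq> U" unfolding h_def U_def by (auto simp: cut_sign_def)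
  ultimately have "h ` U = U" by (metis image_subset_iff subsetI subset_antisym rev_image_eqI)
  moreover have "(\<lambda>u. switch S w \<bullet> gram_vec E u) ` U = (\<lambda>u. w \<bullet> gram_vec E u) ` h ` U"
    unfolding inner_switch_gram_vec[OF assms] h_def by (simp add: image_image)
  ultimately show ?thesis unfolding sdp_eq_Sup_gram_vec U_def[symmetric] by simp
qed

lemma kappa_w_switch:
  assumes "\<forall>e\<in>E. card e = 2"
  shows "kappa_w E (switch S w) = kappa_w E w"
  unfolding kappa_w_def ip_switch[OF assms] sdp_switch[OF assms] ..

lemma polyhedron_eq_Int_facet_halfspaces:
  fixes S :: "'a::euclidean_space set"
  assumes "polyhedron S"
  obtains F where "finite F" "S = affine hull S \<inter> \<Inter>F"
    "\<And>h. h \<in> F \<Longrightarrow> \<exists>a b. h = {x. a \<bullet> x \<le> b} \<and> S \<inter> {x. a \<bullet> x = b} facet_of S"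
proof -
  obtain F where F: "finite F" and seq: "S = affine hull S \<inter> \<Inter>F"
    and hF: "\<forall>h\<in>F. \<exists>a b. a \<noteq> 0 \<and> h = {x. a \<bullet> x \<le> b}"
    and psub: "\<And>F'. F' \<subset> F \<Longrightarrow> S \<subset> affine hull S \<inter> \<Inter>F'"
    using assms unfolding polyhedron_Int_affine_minimal by blast
  from hF obtain a b where ab: "\<And>h. h \<in> F \<Longrightarrow> a h \<noteq> 0 \<and> h = {x. a h \<bullet> x \<le> b h}"
    by metis
  have "S \<inter> {x. a h \<bullet> x = b h} facet_of S" if "h \<in> F" for h
    using facet_of_polyhedron_explicit[OF F seq ab psub] that by blast
  with ab show thesis by (intro that[OF F seq]) blast
qed

text \<open>The origin is the average of the cut points, so no facet of \<open>CUT(G)\<close> passes through it.\<close>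

lemma facet_rhs_pos:
  assumes "\<forall>e\<in>E. card e = 2"
    and le: "CUT E \<subseteq> {x. a \<bullet> x \<le> b}" and facet: "CUT E \<inter> {x. a \<bullet> x = b} facet_of CUT E"
  shows "b > 0"
proof -
  have "0 \<le> b" using le zero_in_CUT[OF assms(1)] by auto
  moreover have "b \<noteq> 0"
  proof
    assume "b = 0"
    define g where "g T = - (a \<bullet> cutvec E (cut_sign T))" for T
    have "0 \<le> g T" for T
      using le cut_points_subset_CUT \<open>b = 0\<close> by (fastforce simp: g_def cut_points_def)
    moreover have "(\<Sum>T\<in>UNIV. g T) = 0"
      unfolding g_def sum_negf inner_sum_right[symmetric] sum_cutvec_cut_sign_eq_0[OF assms(1)]
      by simp
    ultimately have "g T = 0" for T by (simp add: sum_nonneg_eq_0_iff)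
    then have "cut_points E \<subseteq> CUT E \<inter> {x. a \<bullet> x = b}"
      using cut_points_subset_CUT \<open>b = 0\<close> by (auto simp: g_def cut_points_def)
    moreover have "convex (CUT E \<inter> {x. a \<bullet> x = b})"
      using facet by (auto simp: facet_of_def dest: face_of_imp_convex)
    ultimately have "CUT E \<subseteq> CUT E \<inter> {x. a \<bullet> x = b}"
      unfolding CUT_eq_convex_hull_cut_points[of E] by (rule hull_minimal)
    then have "CUT E \<inter> {x. a \<bullet> x = b} = CUT E" by blast
    then show False using facet by simp
  qed
  ultimately show ?thesis by simp
qed

definition proj_RE :: "'n::finite set set \<Rightarrow> real^('n set) \<Rightarrow> real^('n set)" where
  "proj_RE E a = (\<chi> e. if e \<in> E then a $ e else 0)"

lemma inner_proj_RE:
  assumes "y \<in> RE E"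
  shows "proj_RE E a \<bullet> y = a \<bullet> y"
  unfolding inner_vec_def proj_RE_def using assms by (intro sum.cong) (auto simp: RE_def)

lemma scaled_proj_RE_in_facets:
  assumes le: "CUT E \<subseteq> {x. a \<bullet> x \<le> b}" and facet: "CUT E \<inter> {x. a \<bullet> x = b} facet_of CUT E"
    and "b > 0"
  shows "(1 / b) *\<^sub>R proj_RE E a \<in> facets E"
proof -
  let ?f = "(1 / b) *\<^sub>R proj_RE E a"
  have f_y: "?f \<bullet> y = (a \<bullet> y) / b" if "y \<in> CUT E" for y
    using inner_proj_RE[OF subsetD[OF CUT_subset_RE that]] by simp
  have "?f \<in> RE E" unfolding proj_RE_def RE_def by simp
  moreover have "\<forall>y\<in>CUT E. ?f \<bullet> y \<le> 1" using le f_y \<open>b > 0\<close> by auto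
  moreover have "{y \<in> CUT E. ?f \<bullet> y = 1} = CUT E \<inter> {x. a \<bullet> x = b}"
    using f_y \<open>b > 0\<close> by auto
  ultimately show ?thesis using facet unfolding facets_def by simp
qed

lemma CUT_eq_facet_constraints:
  assumes "\<forall>e\<in>E. card e = 2"
  shows "CUT E = {y \<in> RE E. \<forall>f\<in>facets E. f \<bullet> y \<le> 1}"
proof (intro set_eqI iffI)
  fix y assume "y \<in> CUT E"
  then show "y \<in> {y \<in> RE E. \<forall>f\<in>facets E. f \<bullet> y \<le> 1}"
    using CUT_subset_RE unfolding facets_def by auto
next
  fix y assume y: "y \<in> {y \<in> RE E. \<forall>f\<in>facets E. f \<bullet> y \<le> 1}"
  obtain F where "finite F" and seq: "CUT E = affine hull CUT E \<inter> \<Inter>F"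
    and hF: "\<And>h. h \<in> F \<Longrightarrow>
      \<exists>a b. h = {x. a \<bullet> x \<le> b} \<and> CUT E \<inter> {x. a \<bullet> x = b} facet_of CUT E"
    using polyhedron_eq_Int_facet_halfspaces[OF polytope_imp_polyhedron[OF polytope_CUT[of E]]] by blast
  have "y \<in> h" if "h \<in> F" for h
  proof -
    obtain a b where h: "h = {x. a \<bullet> x \<le> b}" and facet: "CUT E \<inter> {x. a \<bullet> x = b} facet_of CUT E"
      using hF[OF \<open>h \<in> F\<close>] by blast
    have le: "CUT E \<subseteq> {x. a \<bullet> x \<le> b}" using seq h \<open>h \<in> F\<close> by blast
    have "b > 0" by (rule facet_rhs_pos[OF assms le facet])
    then have "((1 / b) *\<^sub>R proj_RE E a) \<bullet> y \<le> 1"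
      using y scaled_proj_RE_in_facets[OF le facet] by blast
    then show ?thesis using y inner_proj_RE[of y E a] \<open>b > 0\<close> h by (simp add: divide_le_eq)
  qed
  then show "y \<in> CUT E" using seq y affine_hull_CUT[OF assms] by blast
qed

lemma facets_nonempty:
  assumes "\<forall>e\<in>E. card e = 2" "E \<noteq> {}"
  shows "facets E \<noteq> {}"
proof
  assume "facets E = {}"
  then have RE_CUT: "RE E \<subseteq> CUT E" using CUT_eq_facet_constraints[OF assms(1)] by auto
  obtain e where "e \<in> E" using assms(2) by blast
  define v :: "real^('a set)" where "v = axis e 1"
  have "(ip E v + 1) *\<^sub>R v \<in> RE E" using \<open>e \<in> E\<close> unfolding RE_def v_def by (simp add: axis_def)
  then have "v \<bullet> ((ip E v + 1) *\<^sub>R v) \<le> ip E v" using RE_CUT inner_le_ip by blast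
  then show False unfolding v_def by (simp add: inner_axis)
qed

lemma ip_facet:
  assumes "f \<in> facets E"
  shows "ip E f = 1"
proof -
  from assms have le: "\<forall>y\<in>CUT E. f \<bullet> y \<le> 1" and facet: "{y \<in> CUT E. f \<bullet> y = 1} facet_of CUT E"
    unfolding facets_def by auto
  obtain y where "y \<in> cut_points E" "ip E f = f \<bullet> y" by (rule ip_attained)
  then have "ip E f \<le> 1" using le cut_points_subset_CUT by auto
  moreover obtain z where "z \<in> CUT E" "f \<bullet> z = 1" using facet unfolding facet_of_def by auto
  then have "1 \<le> ip E f" using inner_le_ip by metis
  ultimately show ?thesis by simp
qed

lemma sdp_le_mult_ip:
  assumes "\<forall>e\<in>E. card e = 2" and "m > 0" and sdp_facets: "\<And>f. f \<in> facets E \<Longrightarrow> sdp E f \<le> m"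
  shows "sdp E w \<le> m * ip E w"
proof (rule sdp_le)
  fix u :: "'a \<Rightarrow> real^'a"
  assume u: "\<forall>i. norm (u i) = 1"
  define y where "y = (1 / m) *\<^sub>R gram_vec E u"
  have "y \<in> RE E" unfolding y_def by (rule subspace_scale[OF subspace_RE gram_vec_in_RE])
  moreover have "f \<bullet> y \<le> 1" if "f \<in> facets E" for f
    using inner_gram_vec_le_sdp[OF u, of f E] sdp_facets[OF that] \<open>m > 0\<close>
    by (simp add: y_def divide_le_eq)
  ultimately have "y \<in> CUT E" using CUT_eq_facet_constraints[OF assms(1)] by blast
  then have "w \<bullet> y \<le> ip E w" by (rule inner_le_ip)
  then show "w \<bullet> gram_vec E u \<le> m * ip E w"
    using \<open>m > 0\<close> by (simp add: y_def divide_le_eq mult.commute)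
qed

lemma kappa_w_le_SUP_facets:
  assumes "\<forall>e\<in>E. card e = 2" "E \<noteq> {}"
  shows "ereal (kappa_w E w) \<le> (SUP f\<in>facets E. ereal (kappa_w E f))" (is "_ \<le> ?M")
proof -
  have kappa_w_facet: "kappa_w E f = sdp E f" if "f \<in> facets E" for f
    unfolding kappa_w_def ip_facet[OF that] by simp
  obtain f0 where f0: "f0 \<in> facets E" using facets_nonempty[OF assms] by blast
  have "ereal 1 \<le> ereal (kappa_w E f0)"
    using ip_le_sdp[of E f0] ip_facet[OF f0] kappa_w_facet[OF f0] by simp
  also have "\<dots> \<le> ?M" using f0 by (rule SUP_upper)
  finally have M_ge_1: "ereal 1 \<le> ?M" .
  show ?thesis
  proof (cases ?M)
    case (real m)
    then have "1 \<le> m" using M_ge_1 by simp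
    have "sdp E f \<le> m" if "f \<in> facets E" for f
      using SUP_upper[OF that, of "\<lambda>f. ereal (kappa_w E f)"] real kappa_w_facet[OF that] by simp
    then have sdp_w: "sdp E w \<le> m * ip E w"
      using \<open>1 \<le> m\<close> by (intro sdp_le_mult_ip[OF assms(1)]) auto
    have "kappa_w E w \<le> m"
    proof (cases "ip E w = 0")
      case True
      then show ?thesis using \<open>1 \<le> m\<close> by (simp add: kappa_w_def)
    next
      case False
      then have "ip E w > 0" using ip_nonneg[OF assms(1), of w] by simp
      then show ?thesis using sdp_w by (simp add: kappa_w_def pos_divide_le_eq mult.commute)
    qed
    then show ?thesis using real by simp
  next
    case PInf
    then show ?thesis by simp
  next
    case MInf
    then show ?thesis using M_ge_1 by simp
  qed
qed

lemma kappa_eq_SUP_facets: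
  assumes "\<forall>e\<in>E. card e = 2" "E \<noteq> {}"
  shows "kappa E = (SUP f\<in>facets E. ereal (kappa_w E f))"
proof (rule antisym)
  show "kappa E \<le> (SUP f\<in>facets E. ereal (kappa_w E f))"
    unfolding kappa_def by (rule SUP_least) (rule kappa_w_le_SUP_facets[OF assms])
  show "(SUP f\<in>facets E. ereal (kappa_w E f)) \<le> kappa E"
    unfolding kappa_def by (rule SUP_subset_mono) (auto simp: facets_def)
qed

lemma SUP_kappa_w_switching_representatives:
  assumes "\<forall>e\<in>E. card e = 2" and "R \<subseteq> A" and "\<And>w. w \<in> A \<Longrightarrow> \<exists>S. switch S w \<in> R"
  shows "(SUP w\<in>R. ereal (kappa_w E w)) = (SUP w\<in>A. ereal (kappa_w E w))"
proof (rule antisym)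
  show "(SUP w\<in>R. ereal (kappa_w E w)) \<le> (SUP w\<in>A. ereal (kappa_w E w))"
    by (rule SUP_subset_mono[OF assms(2)]) simp
  show "(SUP w\<in>A. ereal (kappa_w E w)) \<le> (SUP w\<in>R. ereal (kappa_w E w))"
  proof (rule SUP_least)
    fix w assume "w \<in> A"
    then obtain S where "switch S w \<in> R" using assms(3) by blast
    then have "ereal (kappa_w E (switch S w)) \<le> (SUP w\<in>R. ereal (kappa_w E w))"
      by (rule SUP_upper)
    then show "ereal (kappa_w E w) \<le> (SUP w\<in>R. ereal (kappa_w E w))"
      by (simp add: kappa_w_switch[OF assms(1)])
  qed
qed

theorem mainTheorem2:
  fixes E :: "'n::finite set set"
  assumes "\<forall>e\<in>E. card e = 2"
    and "E \<noteq> {}"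
  shows "kappa E = (SUP w\<in>facets E. ereal (kappa_w E w)) \<and>
         (\<forall>R. R \<subseteq> facets E \<and> (\<forall>w\<in>facets E. \<exists>S. switch S w \<in> R)
              \<longrightarrow> kappa E = (SUP w\<in>R. ereal (kappa_w E w)))"
proof -
  have "kappa E = (SUP w\<in>facets E. ereal (kappa_w E w))" by (rule kappa_eq_SUP_facets[OF assms])
  moreover have "(SUP w\<in>R. ereal (kappa_w E w)) = (SUP w\<in>facets E. ereal (kappa_w E w))"
    if "R \<subseteq> facets E" "\<forall>w\<in>facets E. \<exists>S. switch S w \<in> R" for R
    using that by (intro SUP_kappa_w_switching_representatives[OF assms(1)]) auto
  ultimately show ?thesis by auto
qed

end
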